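(* Let $\alpha,\beta\in\mathbb{R}^n_{>}$. Then $\alpha$-GSP is Vickrey-preserving on $\Theta^\beta$ if and only if, for every $\theta\in\Theta^\beta$ (with the agents indexed so that $v_1(\theta_1)\ge v_2(\theta_2)\ge\dots\ge v_n(\theta_n)$ and with $v_{n+1}(\theta_{n+1}):=0$), the sequence $\{p_j(\theta)/\alpha_j\}_{j=1,\dots,k}$ is decreasing, where $$p_j(\theta)=\sum_{i=j}^{k} v_{i+1}(\theta_{i+1})\cdot(\beta_i-\beta_{i+1}).$$
   Context: Sponsored search setting: a set $N=\{1,\dots,n\}$ of agents and $k\le n$ slots $1,\dots,k$. An outcome assigns the agents to distinct positions in $\{1,\dots,n\}$; an agent in position $j\le k$ receives slot $j$, an agent in a position $>k$ receives nothing (value $0$). Utilities are quasilinear (value minus payment). $\mathbb{R}^n_{>}$ denotes the set of vectors $\alpha$ with $1=\alpha_1>\alpha_2>\dots>\alpha_k>0$ and $\alpha_j=0$ for $j>k$ (also set $\alpha_{n+1}=0$). For $\beta\in\mathbb{R}^n_{>}$, $\Theta^\beta$ is the set of type profiles $\theta$ such that each agent $i$ has a per-click value $v_i(\theta_i)\ge 0$ and values slot $j$ at $\beta_j\cdot v_i(\theta_i)$. The (fully expressive) VCG mechanism: each agent reports a bid $x_{i,j}$ for each slot $j$; it chooses an assignment maximizing the sum of the bids of agents on their assigned slots and charges each agent $i$ the Clarke payment (maximum total bid of the others over all assignments minus the others' total bid in the chosen assignment). The VCG outcome for $\theta$ is the assignment and payments of VCG when every agent bids its true value for every slot. $\alpha$-GSP: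 each agent $i$ submits a single number $b_i\ge 0$ (equivalently, the bid vector $(\alpha_1 b_i,\dots,\alpha_k b_i)$ in the GSP mechanism); agents are ranked by $b_i$ (ties broken arbitrarily); the agent of rank $j\le k$ receives slot $j$ and pays $\alpha_j$ times the $(j+1)$-st highest value of $b$ (zero if there is none). This is the GSP mechanism (slots sold in order $1,\dots,k$, each to the highest remaining bidder on that slot at the second-highest remaining bid on that slot) restricted to such bid vectors. Complete information: for a given type profile, a message profile is a Nash equilibrium if no agent can strictly increase its utility by unilaterally changing its message within its allowed message set. A mechanism is Vickrey-preserving on a set $T$ of type profiles if for every $\theta\in T$ it has a Nash equilibrium (for $\theta$) yielding the VCG outcome for $\theta$ (same assignment and payments). *)

theory Defs
  imports Complex_Main "HOL-Combinatorics.Permutations"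
begin

(* Agents are 1..n, positions are 1..n, slots are 1..k.
   Vectors alpha, beta : nat => real are indexed from 1. *)

definition in_Rn_gt :: "nat \<Rightarrow> nat \<Rightarrow> (nat \<Rightarrow> real) \<Rightarrow> bool" where
  "in_Rn_gt n k a \<longleftrightarrow> 1 \<le> k \<and> k \<le> n \<and> a 1 = 1 \<and>
     (\<forall>j. 1 \<le> j \<and> j < k \<longrightarrow> a (j+1) < a j) \<and> a k > 0 \<and>
     (\<forall>j. k < j \<and> j \<le> n + 1 \<longrightarrow> a j = 0)"

(* type profile in Theta^beta: per-click values v i >= 0 of agents 1..n *)
definition type_profile :: "nat \<Rightarrow> (nat \<Rightarrow> real) \<Rightarrow> bool" where
  "type_profile n v \<longleftrightarrow> (\<forall>i\<in>{1..n}. 0 \<le> v i)"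

(* an outcome assigns agents to distinct positions: pi i = position of agent i *)
definition assignments :: "nat \<Rightarrow> (nat \<Rightarrow> nat) set" where
  "assignments n = {\<pi>. \<pi> permutes {1..n}}"

(* total (true) value of all agents except i under assignment pi;
   agent l values position j at beta j * v l (beta j = 0 for j > k) *)
definition others_welfare :: "nat \<Rightarrow> (nat \<Rightarrow> real) \<Rightarrow> (nat \<Rightarrow> real) \<Rightarrow> (nat \<Rightarrow> nat) \<Rightarrow> nat \<Rightarrow> real" where
  "others_welfare n \<beta> v \<pi> i = (\<Sum>l\<in>{1..n} - {i}. \<beta> (\<pi> l) * v l)"

definition welfare :: "nat \<Rightarrow> (nat \<Rightarrow> real) \<Rightarrow> (nat \<Rightarrow> real) \<Rightarrow> (nat \<Rightarrow> nat) \<Rightarrow> real" where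
  "welfare n \<beta> v \<pi> = (\<Sum>l\<in>{1..n}. \<beta> (\<pi> l) * v l)"

definition clarke_payment :: "nat \<Rightarrow> (nat \<Rightarrow> real) \<Rightarrow> (nat \<Rightarrow> real) \<Rightarrow> (nat \<Rightarrow> nat) \<Rightarrow> nat \<Rightarrow> real" where
  "clarke_payment n \<beta> v \<pi> i =
     Max ((\<lambda>\<pi>'. others_welfare n \<beta> v \<pi>' i) ` assignments n) - others_welfare n \<beta> v \<pi> i"

definition vcg_outcome :: "nat \<Rightarrow> (nat \<Rightarrow> real) \<Rightarrow> (nat \<Rightarrow> real) \<Rightarrow> (nat \<Rightarrow> nat) \<Rightarrow> (nat \<Rightarrow> real) \<Rightarrow> bool" where
  "vcg_outcome n \<beta> v \<pi> pay \<longleftrightarrow> \<pi> \<in> assignments n \<and>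
     (\<forall>\<pi>'\<in>assignments n. welfare n \<beta> v \<pi>' \<le> welfare n \<beta> v \<pi>) \<and>
     (\<forall>i\<in>{1..n}. pay i = clarke_payment n \<beta> v \<pi> i)"

(* m-th highest value of b among agents 1..n (0 if m > n) *)
definition nth_highest :: "nat \<Rightarrow> (nat \<Rightarrow> real) \<Rightarrow> nat \<Rightarrow> real" where
  "nth_highest n b m = (if 1 \<le> m \<and> m \<le> n then rev (sort (map b [1..<Suc n])) ! (m - 1) else 0)"

definition gsp_ranking :: "nat \<Rightarrow> (nat \<Rightarrow> real) \<Rightarrow> (nat \<Rightarrow> nat) \<Rightarrow> bool" where
  "gsp_ranking n b \<pi> \<longleftrightarrow> \<pi> \<in> assignments n \<and>
     (\<forall>i\<in>{1..n}. \<forall>l\<in>{1..n}. \<pi> i < \<pi> l \<longrightarrow> b l \<le> b i)"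

definition gsp_payment :: "nat \<Rightarrow> nat \<Rightarrow> (nat \<Rightarrow> real) \<Rightarrow> (nat \<Rightarrow> real) \<Rightarrow> (nat \<Rightarrow> nat) \<Rightarrow> nat \<Rightarrow> real" where
  "gsp_payment n k \<alpha> b \<pi> i = (if \<pi> i \<le> k then \<alpha> (\<pi> i) * nth_highest n b (\<pi> i + 1) else 0)"

definition gsp_utility :: "nat \<Rightarrow> nat \<Rightarrow> (nat \<Rightarrow> real) \<Rightarrow> (nat \<Rightarrow> real) \<Rightarrow> (nat \<Rightarrow> real) \<Rightarrow> (nat \<Rightarrow> real) \<Rightarrow> (nat \<Rightarrow> nat) \<Rightarrow> nat \<Rightarrow> real" where
  "gsp_utility n k \<alpha> \<beta> v b \<pi> i = \<beta> (\<pi> i) * v i - gsp_payment n k \<alpha> b \<pi> i"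

(* (b, pi) is a Nash equilibrium of alpha-GSP for values v: the outcome pi is a
   valid ranking for b, and no agent can strictly gain by any unilateral
   deviation to a bid c >= 0, whatever ranking of the new profile is chosen *)
definition gsp_nash :: "nat \<Rightarrow> nat \<Rightarrow> (nat \<Rightarrow> real) \<Rightarrow> (nat \<Rightarrow> real) \<Rightarrow> (nat \<Rightarrow> real) \<Rightarrow> (nat \<Rightarrow> real) \<Rightarrow> (nat \<Rightarrow> nat) \<Rightarrow> bool" where
  "gsp_nash n k \<alpha> \<beta> v b \<pi> \<longleftrightarrow> (\<forall>i\<in>{1..n}. 0 \<le> b i) \<and> gsp_ranking n b \<pi> \<and>
     (\<forall>i\<in>{1..n}. \<forall>c. \<forall>\<pi>'. 0 \<le> c \<longrightarrow> gsp_ranking n (b(i := c)) \<pi>' \<longrightarrow>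
        gsp_utility n k \<alpha> \<beta> v (b(i := c)) \<pi>' i \<le> gsp_utility n k \<alpha> \<beta> v b \<pi> i)"

definition vickrey_preserving_gsp :: "nat \<Rightarrow> nat \<Rightarrow> (nat \<Rightarrow> real) \<Rightarrow> (nat \<Rightarrow> real) \<Rightarrow> bool" where
  "vickrey_preserving_gsp n k \<alpha> \<beta> \<longleftrightarrow> (\<forall>v. type_profile n v \<longrightarrow>
     (\<exists>b \<pi> pay. vcg_outcome n \<beta> v \<pi> pay \<and> gsp_nash n k \<alpha> \<beta> v b \<pi> \<and>
        (\<forall>i\<in>{1..n}. gsp_payment n k \<alpha> b \<pi> i = pay i)))"

(* p_j(theta) = sum_{i=j}^k w_{i+1} (beta_i - beta_{i+1}), where w is the sorted
   value vector (w_i = v_{s i} for i <= n, w_{n+1} = 0) *)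
definition p_seq :: "nat \<Rightarrow> nat \<Rightarrow> (nat \<Rightarrow> real) \<Rightarrow> (nat \<Rightarrow> real) \<Rightarrow> nat \<Rightarrow> real" where
  "p_seq n k \<beta> w j = (\<Sum>i=j..k. (if i + 1 \<le> n then w (i + 1) else 0) * (\<beta> i - \<beta> (i + 1)))"

end

theory Submission
  imports Defs
begin

text \<open>Write \<open>d t = \<beta> t - \<beta> (t + 1)\<close>, which is positive for \<open>1 \<le> t \<le> k\<close>. Abel summation turns
  the welfare of an assignment into \<open>\<Sum>t. d t\<close> times the value of the agents in the first \<open>t\<close>
  positions, so an efficient assignment puts \<open>t\<close> highest values into the first \<open>t\<close> positions for
  every \<open>t \<le> k\<close>, and the Clarke payment of the agent in slot \<open>j\<close> is \<open>p j\<close>: removing it moves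
  every agent below it up by one slot.

  If \<open>\<alpha>\<close>-GSP has an equilibrium with the VCG outcome, the agent in slot \<open>j\<close> pays \<open>\<alpha> j\<close> times the
  \<open>(j + 1)\<close>-st highest bid, which is therefore \<open>p j / \<alpha> j\<close>; since bids read in rank order
  decrease, so do these ratios. Conversely, if they decrease, let the agent of rank \<open>r\<close> bid
  \<open>p (r - 1) / \<alpha> (r - 1)\<close>. The ranking then agrees with the values and every agent pays its VCG
  price. An agent deviating into slot \<open>m\<close> still faces \<open>m\<close> other bids of at least \<open>p m / \<alpha> m\<close>,
  so it pays at least \<open>p m\<close>, and no such move is profitable because VCG prices are envy-free.\<close>

lemma in_Rn_gt_le: "in_Rn_gt n k a \<Longrightarrow> k \<le> n"
  by (simp add: in_Rn_gt_def)

lemma in_Rn_gt_zero: "in_Rn_gt n k a \<Longrightarrow> k < j \<Longrightarrow> j \<le> n + 1 \<Longrightarrow> a j = 0"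
  by (simp add: in_Rn_gt_def)

lemma in_Rn_gt_diff_pos:
  assumes "in_Rn_gt n k a" "1 \<le> t" "t \<le> k"
  shows "0 < a t - a (t + 1)"
  using assms by (cases "t = k") (auto simp: in_Rn_gt_def)

lemma in_Rn_gt_telescope:
  assumes a: "in_Rn_gt n k a" and r: "r \<in> {1..n}"
  shows "a r = (\<Sum>t=r..k. a t - a (t + 1))"
proof (cases "r \<le> k + 1")
  case True
  have "(\<Sum>t=r..k. (- a) (Suc t) - (- a) t) = (- a) (Suc k) - (- a) r"
    using True by (intro sum_Suc_diff) simp
  then show ?thesis using in_Rn_gt_zero[OF a, of "k + 1"] in_Rn_gt_le[OF a] by simp
next
  case False
  then show ?thesis using in_Rn_gt_zero[OF a, of r] r by simp
qed

lemma in_Rn_gt_nonneg: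
  assumes a: "in_Rn_gt n k a" and r: "r \<in> {1..n}"
  shows "0 \<le> a r"
  unfolding in_Rn_gt_telescope[OF a r]
  using r in_Rn_gt_diff_pos[OF a] by (intro sum_nonneg) (simp add: less_imp_le)

lemma in_Rn_gt_pos:
  assumes a: "in_Rn_gt n k a" and r: "1 \<le> r" "r \<le> k"
  shows "0 < a r"
proof -
  have "0 < (\<Sum>t=r..k. a t - a (t + 1))"
    using r in_Rn_gt_diff_pos[OF a] by (intro sum_pos) auto
  then show ?thesis using in_Rn_gt_telescope[OF a] r in_Rn_gt_le[OF a] by simp
qed

section \<open>Sorted values and ranked bids\<close>

definition nonincreasing_upto :: "nat \<Rightarrow> (nat \<Rightarrow> real) \<Rightarrow> bool" where
  "nonincreasing_upto n w \<longleftrightarrow> (\<forall>j. 1 \<le> j \<and> j < n \<longrightarrow> w (j + 1) \<le> w j)"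

lemma nonincreasing_uptoD:
  assumes w: "nonincreasing_upto n w" and "1 \<le> a" "a \<le> b" "b \<le> n"
  shows "w b \<le> w a"
  using \<open>a \<le> b\<close> \<open>b \<le> n\<close>
proof (induction b rule: dec_induct)
  case (step m)
  then have "w (m + 1) \<le> w m" using w \<open>1 \<le> a\<close> by (simp add: nonincreasing_upto_def)
  with step show ?case by simp
qed simp

lemma sum_le_prefix_sum:
  assumes w: "nonincreasing_upto n w" and nonneg: "\<forall>r\<in>{1..n}. 0 \<le> w r"
    and B: "B \<subseteq> {1..n}" "card B \<le> t" "t \<le> n"
  shows "sum w B \<le> sum w {1..t}"
proof (cases "t = 0")
  case True
  then show ?thesis using B finite_subset by fastforce
next
  case False
  let ?C = "{1..t}"
  have fin: "finite B" using B finite_subset by blast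
  have "card (B - ?C) \<le> card (?C - B)"
    using B fin by (simp add: card_Diff_subset_Int inf_commute)
  have "sum w (B - ?C) \<le> sum (\<lambda>_. w t) (B - ?C)"
    using B False by (intro sum_mono nonincreasing_uptoD[OF w]) auto
  also have "\<dots> \<le> sum (\<lambda>_. w t) (?C - B)"
    using \<open>card (B - ?C) \<le> card (?C - B)\<close> nonneg B False
    by (auto intro!: mult_right_mono)
  also have "\<dots> \<le> sum w (?C - B)"
    using B False by (intro sum_mono nonincreasing_uptoD[OF w]) auto
  finally have "sum w (B - ?C) \<le> sum w (?C - B)" .
  moreover have "sum w B = sum w (B - ?C) + sum w (B \<inter> ?C)"
    by (metis add.commute fin sum.Int_Diff)
  moreover have "sum w ?C = sum w (?C - B) + sum w (B \<inter> ?C)"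
    by (metis add.commute finite_atLeastAtMost inf_commute sum.Int_Diff)
  ultimately show ?thesis by linarith
qed

text \<open>\<open>s r\<close> is the agent of rank \<open>r\<close>, so \<open>(v \<circ> s) r\<close> is the paper's \<open>v\<^sub>r(\<theta>\<^sub>r)\<close>.\<close>

definition sorting_perm :: "nat \<Rightarrow> (nat \<Rightarrow> real) \<Rightarrow> (nat \<Rightarrow> nat) \<Rightarrow> bool" where
  "sorting_perm n v s \<longleftrightarrow> s permutes {1..n} \<and> nonincreasing_upto n (v \<circ> s)"

lemma sorting_perm_iff:
  "sorting_perm n v s \<longleftrightarrow> s permutes {1..n} \<and> (\<forall>j. 1 \<le> j \<and> j < n \<longrightarrow> v (s (j + 1)) \<le> v (s j))"
  by (simp add: sorting_perm_def nonincreasing_upto_def)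

lemma sorting_perm_exists: "\<exists>s. sorting_perm n v s"
proof -
  define xs where "xs = sort_key (\<lambda>l. - v l) [1..<Suc n]"
  have "mset xs = mset [1..<Suc n]" unfolding xs_def by simp
  then have "distinct xs" "set xs = {1..n}" "length xs = n"
    by (metis distinct_upt mset_eq_imp_distinct_iff,
        metis atLeastLessThanSuc_atLeastAtMost set_mset_mset set_upt,
        metis diff_Suc_1 length_upt mset_eq_length)
  define s where "s r = (if r \<in> {1..n} then xs ! (r - 1) else r)" for r
  have "bij_betw (\<lambda>r. r - 1) {1..n} {..<n}"
    by (rule bij_betw_byWitness[where f' = Suc]) auto
  moreover have "bij_betw ((!) xs) {..<n} {1..n}"
    using \<open>distinct xs\<close> \<open>set xs = {1..n}\<close> \<open>length xs = n\<close> by (intro bij_betw_nth) auto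
  ultimately have "bij_betw ((!) xs \<circ> (\<lambda>r. r - 1)) {1..n} {1..n}"
    by (rule bij_betw_trans)
  then have "bij_betw s {1..n} {1..n}"
    by (rule bij_betw_cong[THEN iffD1, rotated]) (simp add: s_def)
  then have "s permutes {1..n}" by (rule bij_imp_permutes) (auto simp: s_def)
  moreover have "nonincreasing_upto n (v \<circ> s)"
    using sorted_sort_key[of "\<lambda>l. - v l" "[1..<Suc n]", folded xs_def] \<open>length xs = n\<close>
    unfolding nonincreasing_upto_def
    by (auto simp: s_def dest: sorted_nth_mono[of _ "j - 1" j for j])
  ultimately show ?thesis unfolding sorting_perm_def by blast
qed

lemma gsp_ranking_permutes: "gsp_ranking n b \<pi> \<Longrightarrow> \<pi> permutes {1..n}"
  by (simp add: gsp_ranking_def assignments_def)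

lemma nth_highest_nonneg:
  assumes "\<forall>i\<in>{1..n}. 0 \<le> b i"
  shows "0 \<le> nth_highest n b m"
proof (cases "m \<in> {1..n}")
  case True
  define ys where "ys = rev (sort (map b [1..<Suc n]))"
  have "nth_highest n b m = ys ! (m - 1)" "m - 1 < length ys"
    using True by (auto simp: nth_highest_def ys_def)
  then have "nth_highest n b m \<in> set ys" by simp
  then show ?thesis using assms by (auto simp: ys_def atLeastLessThanSuc_atLeastAtMost)
qed (auto simp: nth_highest_def)

lemma nth_highest_Suc_le:
  assumes "\<forall>i\<in>{1..n}. 0 \<le> b i" and "1 \<le> m"
  shows "nth_highest n b (Suc m) \<le> nth_highest n b m"
proof (cases "Suc m \<le> n")
  case True
  define ys where "ys = rev (sort (map b [1..<Suc n]))"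
  have "sorted (rev ys)" "length ys = n" by (simp_all add: ys_def)
  then have "ys ! m \<le> ys ! (m - 1)" using True by (simp add: sorted_rev_iff_nth_mono)
  then show ?thesis using True \<open>1 \<le> m\<close> by (simp add: nth_highest_def ys_def)
next
  case False
  then show ?thesis using nth_highest_nonneg[OF assms(1)] by (simp add: nth_highest_def)
qed

lemma nth_highest_ranking:
  assumes rk: "gsp_ranking n b \<pi>" and m: "m \<in> {1..n}"
  shows "nth_highest n b m = b (inv \<pi> m)"
proof -
  have p: "\<pi> permutes {1..n}" using rk by (rule gsp_ranking_permutes)
  have pi: "inv \<pi> permutes {1..n}" using p by (rule permutes_inv)
  define ys where "ys = map (\<lambda>r. b (inv \<pi> r)) [1..<Suc n]"
  have "mset (map (inv \<pi>) [1..<Suc n]) = image_mset (inv \<pi>) (mset_set {1..<Suc n})"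
    by (simp only: mset_map mset_upt)
  also have "\<dots> = mset_set (inv \<pi> ` {1..<Suc n})"
    by (rule image_mset_mset_set) (meson permutes_inj_on pi)
  also have "inv \<pi> ` {1..<Suc n} = {1..<Suc n}"
    using permutes_image[OF pi] by (simp add: atLeastLessThanSuc_atLeastAtMost)
  finally have "mset (map (inv \<pi>) [1..<Suc n]) = mset [1..<Suc n]" by (simp only: mset_upt)
  then have "image_mset b (mset (map (inv \<pi>) [1..<Suc n])) = image_mset b (mset [1..<Suc n])"
    by simp
  then have "mset (rev ys) = mset (map b [1..<Suc n])"
    unfolding ys_def by (simp add: image_mset.compositionality o_def del: upt_Suc)
  moreover have "sorted (rev ys)"
    unfolding sorted_rev_iff_nth_mono
  proof (intro allI impI)
    fix i j assume "i \<le> j" "j < length ys"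
    then have "j < n" by (simp add: ys_def del: upt_Suc)
    then have "inv \<pi> (i + 1) \<in> {1..n}" "inv \<pi> (j + 1) \<in> {1..n}"
      using \<open>i \<le> j\<close> permutes_in_image[OF pi, of "i + 1"] permutes_in_image[OF pi, of "j + 1"]
      by simp_all
    moreover have "i = j \<or> \<pi> (inv \<pi> (i + 1)) < \<pi> (inv \<pi> (j + 1))"
      using \<open>i \<le> j\<close> by (auto simp: permutes_inverses(1)[OF p])
    ultimately have "b (inv \<pi> (j + 1)) \<le> b (inv \<pi> (i + 1))"
      using rk unfolding gsp_ranking_def by auto
    then show "ys ! j \<le> ys ! i"
        using \<open>i \<le> j\<close> \<open>j < n\<close> by (simp add: ys_def del: upt_Suc)
  qed
  ultimately have "sort (map b [1..<Suc n]) = rev ys" by (intro properties_for_sort) auto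
  then have "nth_highest n b m = ys ! (m - 1)" using m by (simp add: nth_highest_def)
  moreover have "m - 1 < n" using m by auto
  then have "ys ! (m - 1) = b (inv \<pi> (m - 1 + 1))" by (simp add: ys_def del: upt_Suc)
  ultimately show ?thesis using m by simp
qed

lemma gsp_ranking_comp_inv:
  assumes c: "nonincreasing_upto n c" and s: "s permutes {1..n}"
  shows "gsp_ranking n (c \<circ> inv s) (inv s)"
  unfolding gsp_ranking_def assignments_def mem_Collect_eq
proof (intro conjI ballI impI)
  show "inv s permutes {1..n}" using s by (rule permutes_inv)
  fix i l assume "i \<in> {1..n}" "l \<in> {1..n}" "inv s i < inv s l"
  moreover have "inv s i \<in> {1..n}" "inv s l \<in> {1..n}"
    using \<open>i \<in> {1..n}\<close> \<open>l \<in> {1..n}\<close> permutes_in_image[OF permutes_inv[OF s]] by blast+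
  ultimately show "(c \<circ> inv s) l \<le> (c \<circ> inv s) i"
    using nonincreasing_uptoD[OF c, of "inv s i" "inv s l"] by simp
qed

lemma nth_highest_ge_of_rank:
  assumes rk: "gsp_ranking n b \<pi>" and i: "i \<in> {1..n}" and m: "\<pi> i + 1 \<le> n"
    and Q: "Q \<subseteq> {1..n} - {i}" "\<pi> i \<le> card Q" and ge: "\<forall>l\<in>Q. x \<le> b l"
  shows "x \<le> nth_highest n b (\<pi> i + 1)"
proof (rule ccontr)
  have p: "\<pi> permutes {1..n}" using rk by (rule gsp_ranking_permutes)
  txt \<open>Every member of \<open>Q\<close> outbids the agent \<open>y\<close> ranked just below \<open>i\<close>, so \<open>Q\<close> would have to fit
    into the ranks above \<open>i\<close>.\<close>
  define y where "y = inv \<pi> (\<pi> i + 1)"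
  have y: "y \<in> {1..n}" "\<pi> y = \<pi> i + 1"
    using permutes_in_image[OF permutes_inv[OF p]] m permutes_inverses(1)[OF p]
    by (auto simp: y_def)
  assume "\<not> x \<le> nth_highest n b (\<pi> i + 1)"
  then have below: "b y < x" using nth_highest_ranking[OF rk] m by (simp add: y_def)
  have "\<pi> ` Q \<subseteq> {1..\<pi> i - 1}"
  proof
    fix r assume "r \<in> \<pi> ` Q"
    then obtain l where l: "l \<in> Q" "r = \<pi> l" by blast
    have ln: "l \<in> {1..n}" "l \<noteq> i" using l Q by auto
    have "b y < b l" using ge below l by fastforce
    then have "\<not> \<pi> y < \<pi> l" "l \<noteq> y"
      using rk ln y unfolding gsp_ranking_def by force+
    then have "\<pi> l < \<pi> y" using permutes_inj[OF p] by (metis injD linorder_neqE_nat)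
    moreover have "\<pi> l \<noteq> \<pi> i" "1 \<le> \<pi> l"
      using ln permutes_inj[OF p] permutes_in_image[OF p] by (auto dest: injD)
    ultimately show "r \<in> {1..\<pi> i - 1}" using l y by auto
  qed
  then have "card Q \<le> card {1..\<pi> i - 1}"
    by (rule card_inj_on_le[OF inj_on_subset[OF permutes_inj_on[OF p] subset_UNIV]]) simp
  moreover have "1 \<le> \<pi> i" using permutes_in_image[OF p, of i] i by simp
  ultimately show False using Q by simp
qed

section \<open>Welfare and efficient assignments\<close>

definition prefix_value :: "nat \<Rightarrow> (nat \<Rightarrow> real) \<Rightarrow> (nat \<Rightarrow> nat) \<Rightarrow> nat \<Rightarrow> real" where
  "prefix_value n u \<pi> t = sum u {l\<in>{1..n}. \<pi> l \<le> t}"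

definition efficient :: "nat \<Rightarrow> (nat \<Rightarrow> real) \<Rightarrow> (nat \<Rightarrow> real) \<Rightarrow> (nat \<Rightarrow> nat) \<Rightarrow> bool" where
  "efficient n \<beta> v \<pi> \<longleftrightarrow>
     \<pi> \<in> assignments n \<and> (\<forall>\<pi>'\<in>assignments n. welfare n \<beta> v \<pi>' \<le> welfare n \<beta> v \<pi>)"

lemma efficient_permutes: "efficient n \<beta> v \<pi> \<Longrightarrow> \<pi> permutes {1..n}"
  by (simp add: efficient_def assignments_def)

lemma finite_assignments: "finite (assignments n)"
  by (simp add: assignments_def finite_permutations)

lemma welfare_eq_sum_prefix_values:
  assumes \<beta>: "in_Rn_gt n k \<beta>" and p: "\<pi> permutes {1..n}"
  shows "welfare n \<beta> u \<pi> = (\<Sum>t=1..k. (\<beta> t - \<beta> (t + 1)) * prefix_value n u \<pi> t)"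
proof -
  have "welfare n \<beta> u \<pi> =
      (\<Sum>l\<in>{1..n}. \<Sum>t\<in>{1..k}. if \<pi> l \<le> t then (\<beta> t - \<beta> (t + 1)) * u l else 0)"
    unfolding welfare_def
  proof (rule sum.cong[OF refl])
    fix l assume "l \<in> {1..n}"
    then have pl: "\<pi> l \<in> {1..n}" using permutes_in_image[OF p] by simp
    have "\<beta> (\<pi> l) = (\<Sum>t=\<pi> l..k. \<beta> t - \<beta> (t + 1))" using in_Rn_gt_telescope[OF \<beta> pl] .
    also have "{\<pi> l..k} = {t\<in>{1..k}. \<pi> l \<le> t}" using pl by auto
    also have "(\<Sum>t\<in>\<dots>. \<beta> t - \<beta> (t + 1)) =
        (\<Sum>t\<in>{1..k}. if \<pi> l \<le> t then \<beta> t - \<beta> (t + 1) else 0)"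
      by (rule sum.inter_filter) simp
    finally show "\<beta> (\<pi> l) * u l = (\<Sum>t\<in>{1..k}. if \<pi> l \<le> t then (\<beta> t - \<beta> (t + 1)) * u l else 0)"
      by (auto simp: sum_distrib_right intro!: sum.cong)
  qed
  also have "\<dots> = (\<Sum>t\<in>{1..k}. \<Sum>l\<in>{1..n}. if \<pi> l \<le> t then (\<beta> t - \<beta> (t + 1)) * u l else 0)"
    by (rule sum.swap)
  also have "\<dots> = (\<Sum>t=1..k. (\<beta> t - \<beta> (t + 1)) * prefix_value n u \<pi> t)"
    unfolding prefix_value_def sum_distrib_left
    by (rule sum.cong[OF refl], rule sum.inter_filter[symmetric]) simp
  finally show ?thesis .
qed

lemma card_prefix_le:
  assumes "\<pi> permutes {1..n}"
  shows "card {l\<in>{1..n}. \<pi> l \<le> t} \<le> t"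
proof -
  have "card {l\<in>{1..n}. \<pi> l \<le> t} \<le> card {1..t}"
    using permutes_inj_on[OF assms] permutes_in_image[OF assms] by (intro card_inj_on_le) force+
  then show ?thesis by simp
qed

lemma prefix_value_inv:
  assumes s: "s permutes {1..n}" and t: "t \<le> n"
  shows "prefix_value n u (inv s) t = sum (u \<circ> s) {1..t}"
proof -
  have "{l\<in>{1..n}. inv s l \<le> t} = s ` {1..t}"
  proof (intro equalityI subsetI)
    fix l assume "l \<in> {l\<in>{1..n}. inv s l \<le> t}"
    then have "inv s l \<in> {1..t}" "s (inv s l) = l"
      using permutes_in_image[OF permutes_inv[OF s], of l] permutes_inverses(1)[OF s] by auto
    then show "l \<in> s ` {1..t}" by (metis image_eqI)
  next
    fix l assume "l \<in> s ` {1..t}"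
    then obtain r where "r \<in> {1..t}" "l = s r" by blast
    then show "l \<in> {l\<in>{1..n}. inv s l \<le> t}"
      using t permutes_in_image[OF s, of r] permutes_inverses(2)[OF s] by auto
  qed
  then show ?thesis
    unfolding prefix_value_def by (simp add: sum.reindex permutes_inj_on[OF s])
qed

lemma sum_le_sorted_prefix:
  assumes s: "sorting_perm n v s" and nonneg: "\<forall>l\<in>{1..n}. 0 \<le> v l"
    and A: "A \<subseteq> {1..n}" "card A \<le> t" "t \<le> n"
  shows "sum v A \<le> sum (v \<circ> s) {1..t}"
proof -
  have p: "s permutes {1..n}" and dec: "nonincreasing_upto n (v \<circ> s)"
    using s by (simp_all add: sorting_perm_def)
  have si: "inv s permutes {1..n}" using permutes_inv[OF p] .
  have "sum v A = sum (v \<circ> s) (inv s ` A)"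
    by (simp add: sum.reindex permutes_inj_on[OF si] permutes_inverses(1)[OF p] o_def)
  also have "\<dots> \<le> sum (v \<circ> s) {1..t}"
  proof (rule sum_le_prefix_sum[OF dec])
    show "\<forall>r\<in>{1..n}. 0 \<le> (v \<circ> s) r" using nonneg permutes_in_image[OF p] by simp
    show "inv s ` A \<subseteq> {1..n}" using A permutes_image[OF si] by blast
    show "card (inv s ` A) \<le> t" using A card_image_le[of A "inv s"] finite_subset[OF A(1)] by simp
  qed (use A in simp)
  finally show ?thesis .
qed

lemma welfare_le_sum_bounds:
  assumes \<beta>: "in_Rn_gt n k \<beta>" and p: "\<pi> permutes {1..n}"
    and ub: "\<And>t A. t \<in> {1..k} \<Longrightarrow> A \<subseteq> {1..n} \<Longrightarrow> card A \<le> t \<Longrightarrow> sum u A \<le> U t"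
  shows "welfare n \<beta> u \<pi> \<le> (\<Sum>t=1..k. (\<beta> t - \<beta> (t + 1)) * U t)"
  unfolding welfare_eq_sum_prefix_values[OF \<beta> p]
proof (rule sum_mono)
  fix t assume t: "t \<in> {1..k}"
  have "prefix_value n u \<pi> t \<le> U t"
    unfolding prefix_value_def using card_prefix_le[OF p] by (intro ub[OF t]) auto
  moreover have "0 \<le> \<beta> t - \<beta> (t + 1)" using in_Rn_gt_diff_pos[OF \<beta>] t by (simp add: less_imp_le)
  ultimately show "(\<beta> t - \<beta> (t + 1)) * prefix_value n u \<pi> t \<le> (\<beta> t - \<beta> (t + 1)) * U t"
    by (rule mult_left_mono)
qed

lemma Max_welfare_eq:
  assumes \<beta>: "in_Rn_gt n k \<beta>" and nonneg: "\<forall>l\<in>{1..n}. 0 \<le> u l"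
    and ub: "\<And>t A. t \<in> {1..k} \<Longrightarrow> A \<subseteq> {1..n} \<Longrightarrow> card A \<le> t \<Longrightarrow> sum u A \<le> U t"
    and attained: "\<And>t. t \<in> {1..k} \<Longrightarrow> \<exists>A\<subseteq>{1..n}. card A \<le> t \<and> sum u A = U t"
  shows "Max (welfare n \<beta> u ` assignments n) = (\<Sum>t=1..k. (\<beta> t - \<beta> (t + 1)) * U t)"
proof (rule Max_eqI)
  show "finite (welfare n \<beta> u ` assignments n)" by (simp add: finite_assignments)
  show "y \<le> (\<Sum>t=1..k. (\<beta> t - \<beta> (t + 1)) * U t)" if "y \<in> welfare n \<beta> u ` assignments n" for y
    using that welfare_le_sum_bounds[OF \<beta> _ ub] by (auto simp: assignments_def)
  obtain s where s: "sorting_perm n u s" using sorting_perm_exists by blast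
  then have p: "s permutes {1..n}" by (simp add: sorting_perm_def)
  have "prefix_value n u (inv s) t = U t" if t: "t \<in> {1..k}" for t
  proof (rule antisym)
    have tn: "t \<le> n" using t in_Rn_gt_le[OF \<beta>] by simp
    obtain A where A: "A \<subseteq> {1..n}" "card A \<le> t" "sum u A = U t" using attained[OF t] by blast
    show "U t \<le> prefix_value n u (inv s) t"
      using sum_le_sorted_prefix[OF s nonneg A(1,2) tn] A(3) prefix_value_inv[OF p tn] by simp
    show "prefix_value n u (inv s) t \<le> U t"
      unfolding prefix_value_def using card_prefix_le[OF permutes_inv[OF p]] by (intro ub[OF t]) auto
  qed
  then have "welfare n \<beta> u (inv s) = (\<Sum>t=1..k. (\<beta> t - \<beta> (t + 1)) * U t)"
    unfolding welfare_eq_sum_prefix_values[OF \<beta> permutes_inv[OF p]] by simp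
  moreover have "inv s \<in> assignments n" using permutes_inv[OF p] by (simp add: assignments_def)
  ultimately show "(\<Sum>t=1..k. (\<beta> t - \<beta> (t + 1)) * U t) \<in> welfare n \<beta> u ` assignments n"
    by (metis image_eqI)
qed

lemma Max_welfare_sorted:
  assumes \<beta>: "in_Rn_gt n k \<beta>" and nonneg: "\<forall>l\<in>{1..n}. 0 \<le> v l" and s: "sorting_perm n v s"
  shows "Max (welfare n \<beta> v ` assignments n) = (\<Sum>t=1..k. (\<beta> t - \<beta> (t + 1)) * sum (v \<circ> s) {1..t})"
proof (rule Max_welfare_eq[OF \<beta> nonneg])
  have p: "s permutes {1..n}" using s by (simp add: sorting_perm_def)
  fix t assume t: "t \<in> {1..k}"
  then have tn: "t \<le> n" using in_Rn_gt_le[OF \<beta>] by simp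
  show "sum v A \<le> sum (v \<circ> s) {1..t}" if "A \<subseteq> {1..n}" "card A \<le> t" for A
    using sum_le_sorted_prefix[OF s nonneg that tn] .
  have "s ` {1..t} \<subseteq> {1..n}" "card (s ` {1..t}) \<le> t"
    using tn permutes_image[OF p] card_image_le[of "{1..t}" s] by auto
  moreover have "sum v (s ` {1..t}) = sum (v \<circ> s) {1..t}"
    by (simp add: sum.reindex permutes_inj_on[OF p])
  ultimately show "\<exists>A\<subseteq>{1..n}. card A \<le> t \<and> sum v A = sum (v \<circ> s) {1..t}" by blast
qed

lemma efficient_welfare_eq_Max:
  assumes "efficient n \<beta> v \<pi>"
  shows "welfare n \<beta> v \<pi> = Max (welfare n \<beta> v ` assignments n)"
  using assms unfolding efficient_def by (intro Max_eqI[symmetric]) (auto simp: finite_assignments)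

lemma efficient_inv_sorting_perm:
  assumes \<beta>: "in_Rn_gt n k \<beta>" and nonneg: "\<forall>l\<in>{1..n}. 0 \<le> v l" and s: "sorting_perm n v s"
  shows "efficient n \<beta> v (inv s)"
proof -
  have p: "s permutes {1..n}" using s by (simp add: sorting_perm_def)
  have "welfare n \<beta> v (inv s) = Max (welfare n \<beta> v ` assignments n)"
    unfolding welfare_eq_sum_prefix_values[OF \<beta> permutes_inv[OF p]] Max_welfare_sorted[OF \<beta> nonneg s]
    using prefix_value_inv[OF p] in_Rn_gt_le[OF \<beta>] by (intro sum.cong) auto
  moreover have "inv s \<in> assignments n" using permutes_inv[OF p] by (simp add: assignments_def)
  ultimately show ?thesis
    unfolding efficient_def using Max_ge[OF finite_imageI[OF finite_assignments]] by auto
qed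

lemma efficient_prefix_value:
  assumes \<beta>: "in_Rn_gt n k \<beta>" and nonneg: "\<forall>l\<in>{1..n}. 0 \<le> v l" and s: "sorting_perm n v s"
    and eff: "efficient n \<beta> v \<pi>" and t: "t \<le> k"
  shows "prefix_value n v \<pi> t = sum (v \<circ> s) {1..t}"
proof -
  have p: "\<pi> permutes {1..n}" using eff by (rule efficient_permutes)
  txt \<open>Each prefix value is bounded by the sorted one and the weights are positive, so equal
    weighted sums force termwise equality.\<close>
  define gap where "gap t = (\<beta> t - \<beta> (t + 1)) * (sum (v \<circ> s) {1..t} - prefix_value n v \<pi> t)" for t
  have "sum gap {1..k} = 0"
    using efficient_welfare_eq_Max[OF eff] Max_welfare_sorted[OF \<beta> nonneg s]
    unfolding welfare_eq_sum_prefix_values[OF \<beta> p] gap_def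
    by (simp add: right_diff_distrib sum_subtractf)
  have pos: "0 < \<beta> r - \<beta> (r + 1)" if "r \<in> {1..k}" for r
    using that in_Rn_gt_diff_pos[OF \<beta>] by simp
  have le: "prefix_value n v \<pi> r \<le> sum (v \<circ> s) {1..r}" if "r \<le> k" for r
    unfolding prefix_value_def using that in_Rn_gt_le[OF \<beta>] card_prefix_le[OF p]
    by (intro sum_le_sorted_prefix[OF s nonneg]) auto
  have "\<forall>r\<in>{1..k}. 0 \<le> gap r" using pos le by (simp add: gap_def less_imp_le)
  with \<open>sum gap {1..k} = 0\<close> have zero: "\<forall>r\<in>{1..k}. gap r = 0"
    by (metis finite_atLeastAtMost sum_nonneg_eq_0_iff)
  have "prefix_value n v \<pi> r = sum (v \<circ> s) {1..r}" if "r \<in> {1..k}" for r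
  proof -
    have "gap r = 0" using zero that by blast
    then show ?thesis using pos[OF that] by (simp add: gap_def)
  qed
  moreover have "prefix_value n v \<pi> 0 = 0"
  proof -
    have "\<pi> l \<noteq> 0" if "l \<in> {1..n}" for l using permutes_in_image[OF p, of l] that by auto
    then show ?thesis unfolding prefix_value_def by (intro sum.neutral) force
  qed
  ultimately show ?thesis using t by (cases "t = 0") auto
qed

section \<open>Clarke payments\<close>

lemma sum_fun_upd_zero:
  fixes v :: "nat \<Rightarrow> real"
  assumes "finite A"
  shows "sum (v(i := 0)) A = sum v (A - {i})"
proof -
  have "sum (v(i := 0)) A = sum (v(i := 0)) (A - {i})"
    using assms by (cases "i \<in> A") (simp_all add: sum.remove)
  also have "\<dots> = sum v (A - {i})" by (rule sum.cong) auto
  finally show ?thesis .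
qed

lemma others_welfare_eq_welfare_upd:
  assumes "i \<in> {1..n}"
  shows "others_welfare n \<beta> v \<pi> i = welfare n \<beta> (v(i := 0)) \<pi>"
  unfolding others_welfare_def welfare_def using assms by (simp add: sum.remove)

lemma welfare_eq_own_plus_others:
  assumes "i \<in> {1..n}"
  shows "welfare n \<beta> v \<pi> = \<beta> (\<pi> i) * v i + others_welfare n \<beta> v \<pi> i"
  unfolding welfare_def others_welfare_def using assms by (simp add: sum.remove)

lemma clarke_payment_eq_0:
  assumes \<beta>: "in_Rn_gt n k \<beta>" and nonneg: "\<forall>l\<in>{1..n}. 0 \<le> v l"
    and eff: "efficient n \<beta> v \<pi>" and i: "i \<in> {1..n}" and unassigned: "k < \<pi> i"
  shows "clarke_payment n \<beta> v \<pi> i = 0"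
proof -
  have "\<pi> i \<le> n" using permutes_in_image[OF efficient_permutes[OF eff]] i by fastforce
  then have "\<beta> (\<pi> i) = 0" using in_Rn_gt_zero[OF \<beta> unassigned] by simp
  then have own: "others_welfare n \<beta> v \<pi> i = welfare n \<beta> v \<pi>"
    using welfare_eq_own_plus_others[OF i] by simp
  have "others_welfare n \<beta> v \<pi>' i \<le> welfare n \<beta> v \<pi>" if "\<pi>' \<in> assignments n" for \<pi>'
  proof -
    have "\<pi>' permutes {1..n}" using that by (simp add: assignments_def)
    then have "\<pi>' i \<in> {1..n}" using permutes_in_image i by fastforce
    then have "0 \<le> \<beta> (\<pi>' i) * v i" using in_Rn_gt_nonneg[OF \<beta>] nonneg i by simp
    moreover have "welfare n \<beta> v \<pi>' \<le> welfare n \<beta> v \<pi>" using eff that by (simp add: efficient_def)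
    ultimately show ?thesis using welfare_eq_own_plus_others[OF i, of \<beta> v \<pi>'] by simp
  qed
  moreover have "welfare n \<beta> v \<pi> \<in> (\<lambda>\<pi>'. others_welfare n \<beta> v \<pi>' i) ` assignments n"
    using own eff by (metis efficient_def image_eqI)
  ultimately have "Max ((\<lambda>\<pi>'. others_welfare n \<beta> v \<pi>' i) ` assignments n) = welfare n \<beta> v \<pi>"
    by (intro Max_eqI) (auto simp: finite_assignments)
  then show ?thesis unfolding clarke_payment_def using own by simp
qed

lemma sum_upto_min_Suc:
  fixes t n :: nat
  assumes "t \<le> n"
  shows "sum w {1..min (t + 1) n} = sum w {1..t} + (if t + 1 \<le> n then w (t + 1) else 0)"
proof (cases "t + 1 \<le> n")
  case True
  then show ?thesis by (simp add: sum.cl_ivl_Suc)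
next
  case False
  then have "t = n" using assms by simp
  then show ?thesis by simp
qed

text \<open>For sorted values \<open>w\<close>: the largest total value of \<open>t\<close> agents avoiding the agent of rank \<open>j\<close>.\<close>

definition prefix_sum_without :: "nat \<Rightarrow> (nat \<Rightarrow> real) \<Rightarrow> nat \<Rightarrow> nat \<Rightarrow> real" where
  "prefix_sum_without n w j t = (if t < j then sum w {1..t} else sum w {1..min (t + 1) n} - w j)"

lemma sum_upd_le_prefix_sum_without:
  assumes s: "sorting_perm n v s" and nonneg: "\<forall>l\<in>{1..n}. 0 \<le> v l"
    and i: "i \<in> {1..n}" and vi: "v i = (v \<circ> s) j"
    and A: "A \<subseteq> {1..n}" "card A \<le> t" "t \<le> n"
  shows "sum (v(i := 0)) A \<le> prefix_sum_without n (v \<circ> s) j t"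
proof -
  have fin: "finite A" using A finite_subset by blast
  have card: "card (A - {i}) \<le> t" using A card_Diff1_le[of A i] by simp
  show ?thesis
  proof (cases "t < j")
    case True
    have "sum v (A - {i}) \<le> sum (v \<circ> s) {1..t}"
      using A card by (intro sum_le_sorted_prefix[OF s nonneg]) auto
    then show ?thesis using True sum_fun_upd_zero[OF fin] by (simp add: prefix_sum_without_def)
  next
    case False
    have "card (insert i (A - {i})) \<le> min (t + 1) n"
      using card fin card_mono[of "{1..n}" "insert i (A - {i})"] A i
      by (simp add: card_insert_if)
    then have "sum v (insert i (A - {i})) \<le> sum (v \<circ> s) {1..min (t + 1) n}"
      using A i by (intro sum_le_sorted_prefix[OF s nonneg]) auto
    moreover have "sum v (insert i (A - {i})) = v i + sum v (A - {i})" using fin by (simp add: sum.insert_remove)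
    ultimately show ?thesis
      using False sum_fun_upd_zero[OF fin] vi by (simp add: prefix_sum_without_def)
  qed
qed

context
  fixes n k :: nat and \<beta> v :: "nat \<Rightarrow> real" and s \<pi> :: "nat \<Rightarrow> nat"
  assumes \<beta>: "in_Rn_gt n k \<beta>" and nonneg: "\<forall>l\<in>{1..n}. 0 \<le> v l"
    and s: "sorting_perm n v s" and eff: "efficient n \<beta> v \<pi>"
begin

lemma efficient_prefix_sets:
  defines "X \<equiv> \<lambda>t. {l\<in>{1..n}. \<pi> l \<le> t}"
  shows "X t \<subseteq> {1..n}" "finite (X t)" "card (X t) \<le> t"
    and "t \<le> k \<Longrightarrow> sum v (X t) = sum (v \<circ> s) {1..t}"
  using card_prefix_le[OF efficient_permutes[OF eff]] efficient_prefix_value[OF \<beta> nonneg s eff]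
  by (auto simp: X_def prefix_value_def)

lemma efficient_value_at_position:
  assumes i: "i \<in> {1..n}" and j: "\<pi> i = j" "j \<le> k"
  shows "v i = (v \<circ> s) j"
proof -
  define X where "X t = {l\<in>{1..n}. \<pi> l \<le> t}" for t
  have "1 \<le> j" using permutes_in_image[OF efficient_permutes[OF eff], of i] i j by simp
  then obtain j' where j': "j = Suc j'" by (cases j) auto
  have inj: "x = i" if "\<pi> x = Suc j'" for x
    using that j j' permutes_inj[OF efficient_permutes[OF eff]] by (metis injD)
  have "X j = insert i (X j')"
  proof (rule set_eqI)
    fix x show "x \<in> X j \<longleftrightarrow> x \<in> insert i (X j')"
      using inj[of x] i j j' by (auto simp: X_def le_Suc_eq)
  qed
  moreover have "i \<notin> X j'" "finite (X j')" using j j' by (simp_all add: X_def)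
  ultimately have "sum v (X j) = v i + sum v (X j')" by simp
  then show ?thesis
    using efficient_prefix_sets(4)[of j] efficient_prefix_sets(4)[of j'] j j'
    by (simp add: X_def)
qed

lemma prefix_sum_without_attained:
  assumes i: "i \<in> {1..n}" and j: "\<pi> i = j" "j \<le> k" and t: "t \<in> {1..k}"
  shows "\<exists>A\<subseteq>{1..n}. card A \<le> t \<and> sum (v(i := 0)) A = prefix_sum_without n (v \<circ> s) j t"
proof (cases "t < j")
  case True
  define X where "X = {l\<in>{1..n}. \<pi> l \<le> t}"
  have "i \<notin> X" using True j by (simp add: X_def)
  then have "sum (v(i := 0)) X = sum v X"
    using sum_fun_upd_zero[of X v i] efficient_prefix_sets(2) by (simp add: X_def)
  then show ?thesis
    using True t efficient_prefix_sets(1,3,4)[of t] unfolding prefix_sum_without_def X_def by auto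
next
  case False
  have p: "s permutes {1..n}" using s by (simp add: sorting_perm_def)
  have kn: "k \<le> n" using in_Rn_gt_le[OF \<beta>] .
  define m where "m = min (t + 1) n"
  define S where "S = s ` {1..m}"
  define e where "e = (if i \<in> S then i else s j)"
  have j1: "1 \<le> j" using permutes_in_image[OF efficient_permutes[OF eff], of i] i j by simp
  have "e \<in> S" using False t j1 kn by (auto simp: e_def S_def m_def)
  have "v e = (v \<circ> s) j" using efficient_value_at_position[OF i j] by (simp add: e_def)
  have S: "S \<subseteq> {1..n}" "card S = m"
    using permutes_in_image[OF p] card_image[OF permutes_inj_on[OF p]]
    by (auto simp: S_def m_def)
  have "i \<notin> S - {e}" by (auto simp: e_def)
  then have "sum (v(i := 0)) (S - {e}) = sum v S - v e"
    using sum_fun_upd_zero[of "S - {e}" v i] \<open>e \<in> S\<close> by (simp add: S_def sum_diff1)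
  also have "sum v S = sum (v \<circ> s) {1..m}"
    by (simp add: S_def sum.reindex permutes_inj_on[OF p])
  finally have "sum (v(i := 0)) (S - {e}) = prefix_sum_without n (v \<circ> s) j t"
    using False \<open>v e = (v \<circ> s) j\<close> by (simp add: prefix_sum_without_def m_def)
  moreover have "card (S - {e}) \<le> t" using S \<open>e \<in> S\<close> by (simp add: m_def)
  ultimately show ?thesis using S by blast
qed

lemma Max_others_welfare:
  assumes i: "i \<in> {1..n}" and j: "\<pi> i = j" "j \<le> k"
  shows "Max ((\<lambda>\<pi>'. others_welfare n \<beta> v \<pi>' i) ` assignments n) =
    (\<Sum>t=1..k. (\<beta> t - \<beta> (t + 1)) * prefix_sum_without n (v \<circ> s) j t)"
proof -
  have "(\<lambda>\<pi>'. others_welfare n \<beta> v \<pi>' i) ` assignments n = welfare n \<beta> (v(i := 0)) ` assignments n"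
    using others_welfare_eq_welfare_upd[OF i] by simp
  also have "Max \<dots> = (\<Sum>t=1..k. (\<beta> t - \<beta> (t + 1)) * prefix_sum_without n (v \<circ> s) j t)"
  proof (rule Max_welfare_eq[OF \<beta>])
    show "\<forall>l\<in>{1..n}. 0 \<le> (v(i := 0)) l" using nonneg by simp
    show "sum (v(i := 0)) A \<le> prefix_sum_without n (v \<circ> s) j t"
      if "t \<in> {1..k}" "A \<subseteq> {1..n}" "card A \<le> t" for t A
      using that in_Rn_gt_le[OF \<beta>] efficient_value_at_position[OF i j]
      by (intro sum_upd_le_prefix_sum_without[OF s nonneg i]) auto
    show "\<exists>A\<subseteq>{1..n}. card A \<le> t \<and> sum (v(i := 0)) A = prefix_sum_without n (v \<circ> s) j t"
      if "t \<in> {1..k}" for t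
      using prefix_sum_without_attained[OF i j that] .
  qed
  finally show ?thesis .
qed

lemma prefix_value_upd_zero:
  assumes i: "i \<in> {1..n}" and t: "t \<le> k"
  shows "prefix_value n (v(i := 0)) \<pi> t =
    sum (v \<circ> s) {1..t} - (if \<pi> i \<le> t then v i else 0)"
proof -
  have "prefix_value n (v(i := 0)) \<pi> t = sum v ({l\<in>{1..n}. \<pi> l \<le> t} - {i})"
    unfolding prefix_value_def by (rule sum_fun_upd_zero) simp
  also have "\<dots> = sum v {l\<in>{1..n}. \<pi> l \<le> t} - (if \<pi> i \<le> t then v i else 0)"
    using i by (simp add: sum_diff1)
  finally show ?thesis using efficient_prefix_sets(4)[OF t] by simp
qed

lemma clarke_payment_eq_p_seq:
  assumes i: "i \<in> {1..n}"
  shows "clarke_payment n \<beta> v \<pi> i = p_seq n k \<beta> (v \<circ> s) (\<pi> i)"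
proof (cases "\<pi> i \<le> k")
  case False
  then show ?thesis
    using clarke_payment_eq_0[OF \<beta> nonneg eff i] by (simp add: p_seq_def)
next
  case True
  let ?w = "v \<circ> s" and ?d = "\<lambda>t. \<beta> t - \<beta> (t + 1)"
  have "clarke_payment n \<beta> v \<pi> i =
      (\<Sum>t=1..k. ?d t * prefix_sum_without n ?w (\<pi> i) t) - others_welfare n \<beta> v \<pi> i"
    unfolding clarke_payment_def Max_others_welfare[OF i refl True] ..
  also have "others_welfare n \<beta> v \<pi> i = (\<Sum>t=1..k. ?d t * prefix_value n (v(i := 0)) \<pi> t)"
    unfolding others_welfare_eq_welfare_upd[OF i] welfare_eq_sum_prefix_values[OF \<beta> efficient_permutes[OF eff]] ..
  finally have "clarke_payment n \<beta> v \<pi> i =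
      (\<Sum>t=1..k. ?d t * (prefix_sum_without n ?w (\<pi> i) t - prefix_value n (v(i := 0)) \<pi> t))"
    by (simp only: right_diff_distrib sum_subtractf)
  also have "\<dots> = (\<Sum>t\<in>{1..k}. if \<pi> i \<le> t then (if t + 1 \<le> n then ?w (t + 1) else 0) * ?d t else 0)"
    using prefix_value_upd_zero[OF i] efficient_value_at_position[OF i refl True]
      sum_upto_min_Suc[of _ n ?w] in_Rn_gt_le[OF \<beta>]
    by (intro sum.cong) (auto simp: prefix_sum_without_def)
  also have "\<dots> = p_seq n k \<beta> ?w (\<pi> i)"
  proof -
    have "1 \<le> \<pi> i" using permutes_in_image[OF efficient_permutes[OF eff], of i] i by simp
    then have "{\<pi> i..k} = {t\<in>{1..k}. \<pi> i \<le> t}" by auto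
    then show ?thesis unfolding p_seq_def by (simp only: sum.inter_filter[symmetric] finite_atLeastAtMost)
  qed
  finally show ?thesis .
qed

end

section \<open>Envy-freeness of the VCG prices\<close>

lemma sum_le_sum_from_sign_change:
  fixes f :: "nat \<Rightarrow> real"
  assumes neg: "\<And>t. m \<le> t \<Longrightarrow> t < j \<Longrightarrow> t \<le> k \<Longrightarrow> f t \<le> 0"
    and pos: "\<And>t. j \<le> t \<Longrightarrow> t \<le> k \<Longrightarrow> 0 \<le> f t"
  shows "(\<Sum>t=m..k. f t) \<le> (\<Sum>t=j..k. f t)"
proof (cases "m \<le> j")
  case True
  have "{m..k} \<inter> {j..k} = {j..k}" using True by auto
  then have "(\<Sum>t=m..k. f t) = (\<Sum>t=j..k. f t) + (\<Sum>t\<in>{m..k} - {j..k}. f t)"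
    by (metis finite_atLeastAtMost sum.Int_Diff)
  moreover have "(\<Sum>t\<in>{m..k} - {j..k}. f t) \<le> 0" using neg by (intro sum_nonpos) auto
  ultimately show ?thesis by simp
next
  case False
  have "{j..k} \<inter> {m..k} = {m..k}" using False by auto
  then have "(\<Sum>t=j..k. f t) = (\<Sum>t=m..k. f t) + (\<Sum>t\<in>{j..k} - {m..k}. f t)"
    by (metis finite_atLeastAtMost sum.Int_Diff)
  moreover have "0 \<le> (\<Sum>t\<in>{j..k} - {m..k}. f t)" using pos by (intro sum_nonneg) auto
  ultimately show ?thesis by simp
qed

lemma p_seq_envy_free:
  assumes \<beta>: "in_Rn_gt n k \<beta>" and w: "nonincreasing_upto n w" and nonneg: "\<forall>r\<in>{1..n}. 0 \<le> w r"
    and m: "m \<in> {1..n}" and j: "j \<in> {1..n}"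
  shows "\<beta> m * w j - p_seq n k \<beta> w m \<le> \<beta> j * w j - p_seq n k \<beta> w j"
proof -
  define g where "g t = (if t + 1 \<le> n then w (t + 1) else 0)" for t
  define f where "f t = (\<beta> t - \<beta> (t + 1)) * (w j - g t)" for t
  have gain: "\<beta> r * w j - p_seq n k \<beta> w r = (\<Sum>t=r..k. f t)" if "r \<in> {1..n}" for r
    unfolding in_Rn_gt_telescope[OF \<beta> that] p_seq_def f_def g_def
    by (simp only: sum_distrib_right sum_subtractf[symmetric]) (simp add: algebra_simps)
  have diff: "0 \<le> \<beta> t - \<beta> (t + 1)" if "1 \<le> t" "t \<le> k" for t
    using in_Rn_gt_diff_pos[OF \<beta> that] by simp
  have "(\<Sum>t=m..k. f t) \<le> (\<Sum>t=j..k. f t)"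
  proof (rule sum_le_sum_from_sign_change)
    fix t assume "m \<le> t" "t < j" "t \<le> k"
    then have "w j \<le> g t" using m j nonincreasing_uptoD[OF w, of "t + 1" j] by (simp add: g_def)
    then show "f t \<le> 0" using diff[of t] \<open>m \<le> t\<close> \<open>t \<le> k\<close> m
      by (simp add: f_def mult_nonneg_nonpos)
  next
    fix t assume "j \<le> t" "t \<le> k"
    then have "g t \<le> w j" using j nonneg nonincreasing_uptoD[OF w, of j "t + 1"] by (simp add: g_def)
    then show "0 \<le> f t" using diff[of t] \<open>j \<le> t\<close> \<open>t \<le> k\<close> j by (simp add: f_def)
  qed
  then show ?thesis using gain[OF m] gain[OF j] by simp
qed

lemma p_seq_eq_0: "k < m \<or> n \<le> m \<Longrightarrow> p_seq n k \<beta> w m = 0"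
  by (auto simp: p_seq_def intro: sum.neutral)

lemma p_seq_nonneg:
  assumes \<beta>: "in_Rn_gt n k \<beta>" and nonneg: "\<forall>r\<in>{1..n}. 0 \<le> w r" and m: "1 \<le> m"
  shows "0 \<le> p_seq n k \<beta> w m"
  unfolding p_seq_def using nonneg m in_Rn_gt_diff_pos[OF \<beta>]
  by (intro sum_nonneg) (simp add: less_imp_le)

section \<open>Necessity\<close>

lemma gsp_payment_eq:
  assumes "\<pi> i \<in> {1..n}"
  shows "gsp_payment n k \<alpha> b \<pi> i =
    (if \<pi> i \<le> k \<and> \<pi> i < n then \<alpha> (\<pi> i) * nth_highest n b (\<pi> i + 1) else 0)"
  using assms by (auto simp: gsp_payment_def nth_highest_def)

lemma vickrey_preserving_imp_ratios_decreasing: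
  assumes \<alpha>: "in_Rn_gt n k \<alpha>" and \<beta>: "in_Rn_gt n k \<beta>" and vp: "vickrey_preserving_gsp n k \<alpha> \<beta>"
    and v: "type_profile n v" and s: "sorting_perm n v s" and j: "1 \<le> j" "j < k"
  shows "p_seq n k \<beta> (v \<circ> s) (j + 1) / \<alpha> (j + 1) \<le> p_seq n k \<beta> (v \<circ> s) j / \<alpha> j"
proof -
  have nonneg: "\<forall>l\<in>{1..n}. 0 \<le> v l" using v by (simp add: type_profile_def)
  obtain b \<pi> pay where vcg: "vcg_outcome n \<beta> v \<pi> pay" and nash: "gsp_nash n k \<alpha> \<beta> v b \<pi>"
    and pays: "\<forall>i\<in>{1..n}. gsp_payment n k \<alpha> b \<pi> i = pay i"
    using vp v unfolding vickrey_preserving_gsp_def by blast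
  have eff: "efficient n \<beta> v \<pi>" using vcg by (simp add: vcg_outcome_def efficient_def)
  have p: "\<pi> permutes {1..n}" using eff by (rule efficient_permutes)
  have bid: "nth_highest n b (m + 1) = p_seq n k \<beta> (v \<circ> s) m / \<alpha> m" if m: "1 \<le> m" "m \<le> k" for m
  proof -
    define i where "i = inv \<pi> m"
    have i: "i \<in> {1..n}" "\<pi> i = m"
      using m in_Rn_gt_le[OF \<beta>] permutes_in_image[OF permutes_inv[OF p]] permutes_inverses(1)[OF p]
      by (auto simp: i_def)
    have "\<alpha> m * nth_highest n b (m + 1) = gsp_payment n k \<alpha> b \<pi> i"
      using i m by (simp add: gsp_payment_def)
    also have "\<dots> = p_seq n k \<beta> (v \<circ> s) m"
      using pays vcg i clarke_payment_eq_p_seq[OF \<beta> nonneg s eff i(1)] by (simp add: vcg_outcome_def)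
    finally show ?thesis using in_Rn_gt_pos[OF \<alpha> m] by (simp add: field_simps)
  qed
  have "\<forall>i\<in>{1..n}. 0 \<le> b i" using nash by (simp add: gsp_nash_def)
  then have "nth_highest n b (Suc (j + 1)) \<le> nth_highest n b (j + 1)"
    by (rule nth_highest_Suc_le) simp
  then show ?thesis using bid[of j] bid[of "j + 1"] j by simp
qed

section \<open>Sufficiency\<close>

text \<open>The bid of the agent of rank \<open>r\<close>: the VCG price of slot \<open>r - 1\<close> per unit of \<open>\<alpha>\<close>, which is
  exactly what makes the agent above it pay its VCG price; the top agent bids like the second one.\<close>

definition vcg_bid :: "nat \<Rightarrow> nat \<Rightarrow> (nat \<Rightarrow> real) \<Rightarrow> (nat \<Rightarrow> real) \<Rightarrow> (nat \<Rightarrow> real) \<Rightarrow> nat \<Rightarrow> real" where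
  "vcg_bid n k \<alpha> \<beta> w r =
     (if r = 1 then p_seq n k \<beta> w 1 / \<alpha> 1
      else if r \<le> k + 1 then p_seq n k \<beta> w (r - 1) / \<alpha> (r - 1) else 0)"

context
  fixes n k :: nat and \<alpha> \<beta> w :: "nat \<Rightarrow> real"
  assumes \<alpha>: "in_Rn_gt n k \<alpha>" and \<beta>: "in_Rn_gt n k \<beta>" and nonneg: "\<forall>r\<in>{1..n}. 0 \<le> w r"
begin

lemma vcg_bid_nonneg:
  assumes "1 \<le> r"
  shows "0 \<le> vcg_bid n k \<alpha> \<beta> w r"
proof -
  have ratio: "0 \<le> p_seq n k \<beta> w m / \<alpha> m" if "1 \<le> m" "m \<le> k" for m
    using p_seq_nonneg[OF \<beta> nonneg that(1)] in_Rn_gt_pos[OF \<alpha> that] by simp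
  show ?thesis
  proof (cases "r = 1 \<or> k + 1 < r")
    case True
    then show ?thesis using ratio[of 1] \<alpha> by (auto simp: vcg_bid_def in_Rn_gt_def)
  next
    case False
    then have "1 \<le> r - 1" "r - 1 \<le> k" using assms by auto
    then show ?thesis using ratio[of "r - 1"] False by (simp add: vcg_bid_def)
  qed
qed

lemma p_seq_eq_vcg_bid:
  assumes "m \<in> {1..n}"
  shows "p_seq n k \<beta> w m = (if m \<le> k \<and> m < n then \<alpha> m * vcg_bid n k \<alpha> \<beta> w (m + 1) else 0)"
  using assms in_Rn_gt_pos[OF \<alpha>, of m] p_seq_eq_0[of k m n \<beta> w] by (auto simp: vcg_bid_def)

lemma vcg_bid_nonincreasing:
  assumes ratios: "\<And>j. 1 \<le> j \<Longrightarrow> j < k \<Longrightarrow>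
      p_seq n k \<beta> w (j + 1) / \<alpha> (j + 1) \<le> p_seq n k \<beta> w j / \<alpha> j"
  shows "nonincreasing_upto n (vcg_bid n k \<alpha> \<beta> w)"
  unfolding nonincreasing_upto_def
proof (intro allI impI)
  fix r assume r: "1 \<le> r \<and> r < n"
  show "vcg_bid n k \<alpha> \<beta> w (r + 1) \<le> vcg_bid n k \<alpha> \<beta> w r"
  proof (cases "r = 1 \<or> k < r")
    case True
    then show ?thesis using vcg_bid_nonneg[of r] r by (auto simp: vcg_bid_def)
  next
    case False
    then have "1 \<le> r - 1" "r - 1 < k" "r \<noteq> 0" using r by auto
    then show ?thesis using ratios[of "r - 1"] False by (simp add: vcg_bid_def)
  qed
qed

end

lemma vcg_bid_le_nth_highest_deviation:
  assumes c: "nonincreasing_upto n c" and s: "s permutes {1..n}" and i: "i \<in> {1..n}"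
    and rk: "gsp_ranking n ((c \<circ> inv s)(i := x)) \<pi>" and m: "\<pi> i + 1 \<le> n"
  shows "c (\<pi> i + 1) \<le> nth_highest n ((c \<circ> inv s)(i := x)) (\<pi> i + 1)"
proof (rule nth_highest_ge_of_rank[OF rk i m])
  define Q where "Q = s ` {1..\<pi> i + 1} - {i}"
  have "s ` {1..\<pi> i + 1} \<subseteq> s ` {1..n}" using m by (intro image_mono) auto
  then show "Q \<subseteq> {1..n} - {i}" unfolding Q_def permutes_image[OF s] by blast
  have "card (s ` {1..\<pi> i + 1}) = \<pi> i + 1" by (simp add: card_image permutes_inj_on[OF s])
  then show "\<pi> i \<le> card Q" using card_Diff_singleton_if[of "s ` {1..\<pi> i + 1}" i] by (simp add: Q_def)
  show "\<forall>l\<in>Q. c (\<pi> i + 1) \<le> ((c \<circ> inv s)(i := x)) l"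
  proof
    fix l assume "l \<in> Q"
    then obtain r where r: "r \<in> {1..\<pi> i + 1}" "l = s r" "l \<noteq> i" by (auto simp: Q_def)
    then have "((c \<circ> inv s)(i := x)) l = c r" by (simp add: permutes_inverses(2)[OF s])
    then show "c (\<pi> i + 1) \<le> ((c \<circ> inv s)(i := x)) l"
      using r m nonincreasing_uptoD[OF c, of r "\<pi> i + 1"] by simp
  qed
qed

context
  fixes n k :: nat and \<alpha> \<beta> v :: "nat \<Rightarrow> real" and s :: "nat \<Rightarrow> nat"
  assumes \<alpha>: "in_Rn_gt n k \<alpha>" and \<beta>: "in_Rn_gt n k \<beta>" and v: "type_profile n v"
    and s: "sorting_perm n v s"
    and ratios: "\<And>j. 1 \<le> j \<Longrightarrow> j < k \<Longrightarrow>
      p_seq n k \<beta> (v \<circ> s) (j + 1) / \<alpha> (j + 1) \<le> p_seq n k \<beta> (v \<circ> s) j / \<alpha> j"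
begin

lemma sorted_values_nonneg: "\<forall>r\<in>{1..n}. 0 \<le> (v \<circ> s) r"
  using v s permutes_in_image by (fastforce simp: type_profile_def sorting_perm_def)

lemma sorting_permutes: "s permutes {1..n}"
  using s by (simp add: sorting_perm_def)

lemma sorted_values_nonincreasing: "nonincreasing_upto n (v \<circ> s)"
  using s by (simp add: sorting_perm_def)

lemma vcg_bids_ranking: "gsp_ranking n (vcg_bid n k \<alpha> \<beta> (v \<circ> s) \<circ> inv s) (inv s)"
  by (rule gsp_ranking_comp_inv[OF vcg_bid_nonincreasing[OF \<alpha> \<beta> sorted_values_nonneg ratios]
        sorting_permutes])

lemma vcg_bids_payment:
  assumes i: "i \<in> {1..n}"
  shows "gsp_payment n k \<alpha> (vcg_bid n k \<alpha> \<beta> (v \<circ> s) \<circ> inv s) (inv s) i = p_seq n k \<beta> (v \<circ> s) (inv s i)"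
proof -
  have m: "inv s i \<in> {1..n}" using permutes_in_image[OF permutes_inv[OF sorting_permutes]] i by simp
  have "nth_highest n (vcg_bid n k \<alpha> \<beta> (v \<circ> s) \<circ> inv s) (inv s i + 1) =
      vcg_bid n k \<alpha> \<beta> (v \<circ> s) (inv s i + 1)"
    if "inv s i < n"
    using nth_highest_ranking[OF vcg_bids_ranking, of "inv s i + 1"] that m
      permutes_inv_inv[OF sorting_permutes] permutes_inverses(2)[OF sorting_permutes]
    by simp
  then show ?thesis
    unfolding gsp_payment_eq[where \<pi>="inv s", OF m] p_seq_eq_vcg_bid[OF \<alpha> \<beta> sorted_values_nonneg m] by simp
qed

lemma vcg_bids_deviation_payment:
  assumes i: "i \<in> {1..n}" and rk: "gsp_ranking n ((vcg_bid n k \<alpha> \<beta> (v \<circ> s) \<circ> inv s)(i := x)) \<pi>"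
  shows "p_seq n k \<beta> (v \<circ> s) (\<pi> i) \<le>
    gsp_payment n k \<alpha> ((vcg_bid n k \<alpha> \<beta> (v \<circ> s) \<circ> inv s)(i := x)) \<pi> i"
proof -
  have m: "\<pi> i \<in> {1..n}" using permutes_in_image[OF gsp_ranking_permutes[OF rk]] i by simp
  have "\<alpha> (\<pi> i) * vcg_bid n k \<alpha> \<beta> (v \<circ> s) (\<pi> i + 1)
      \<le> \<alpha> (\<pi> i) * nth_highest n ((vcg_bid n k \<alpha> \<beta> (v \<circ> s) \<circ> inv s)(i := x)) (\<pi> i + 1)"
    if "\<pi> i \<le> k" "\<pi> i < n"
    using that m in_Rn_gt_pos[OF \<alpha>, of "\<pi> i"]
      vcg_bid_le_nth_highest_deviation[OF vcg_bid_nonincreasing[OF \<alpha> \<beta> sorted_values_nonneg ratios]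
        sorting_permutes i rk]
    by (intro mult_left_mono) auto
  then show ?thesis
    unfolding gsp_payment_eq[where \<pi>=\<pi>, OF m] p_seq_eq_vcg_bid[OF \<alpha> \<beta> sorted_values_nonneg m] by simp
qed

lemma vcg_bids_gsp_nash: "gsp_nash n k \<alpha> \<beta> v (vcg_bid n k \<alpha> \<beta> (v \<circ> s) \<circ> inv s) (inv s)"
  unfolding gsp_nash_def
proof (intro conjI ballI allI impI)
  let ?b = "vcg_bid n k \<alpha> \<beta> (v \<circ> s) \<circ> inv s"
  fix i assume i: "i \<in> {1..n}"
  define j where "j = inv s i"
  have j: "j \<in> {1..n}" using permutes_in_image[OF permutes_inv[OF sorting_permutes]] i by (simp add: j_def)
  then have "0 \<le> vcg_bid n k \<alpha> \<beta> (v \<circ> s) j" by (intro vcg_bid_nonneg[OF \<alpha> \<beta> sorted_values_nonneg]) simp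
  then show "0 \<le> ?b i" by (simp add: j_def)
  have vi: "v i = (v \<circ> s) j" by (simp add: j_def permutes_inverses(1)[OF sorting_permutes])
  fix x \<pi> assume rk: "gsp_ranking n (?b(i := x)) \<pi>"
  have m: "\<pi> i \<in> {1..n}" using permutes_in_image[OF gsp_ranking_permutes[OF rk]] i by simp
  have "gsp_utility n k \<alpha> \<beta> v (?b(i := x)) \<pi> i \<le> \<beta> (\<pi> i) * v i - p_seq n k \<beta> (v \<circ> s) (\<pi> i)"
    using vcg_bids_deviation_payment[OF i rk] by (simp add: gsp_utility_def)
  also have "\<dots> \<le> \<beta> j * v i - p_seq n k \<beta> (v \<circ> s) j"
    using p_seq_envy_free[OF \<beta> sorted_values_nonincreasing sorted_values_nonneg m j] vi by (simp add: comp_def)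
  also have "\<dots> = gsp_utility n k \<alpha> \<beta> v ?b (inv s) i"
    using vcg_bids_payment[OF i] by (simp add: gsp_utility_def j_def)
  finally show "gsp_utility n k \<alpha> \<beta> v (?b(i := x)) \<pi> i \<le> gsp_utility n k \<alpha> \<beta> v ?b (inv s) i" .
qed (rule vcg_bids_ranking)

lemma vcg_bids_vickrey_outcome:
  "\<exists>b \<pi> pay. vcg_outcome n \<beta> v \<pi> pay \<and> gsp_nash n k \<alpha> \<beta> v b \<pi> \<and>
     (\<forall>i\<in>{1..n}. gsp_payment n k \<alpha> b \<pi> i = pay i)"
proof (intro exI conjI)
  have nonneg: "\<forall>l\<in>{1..n}. 0 \<le> v l" using v by (simp add: type_profile_def)
  have eff: "efficient n \<beta> v (inv s)" by (rule efficient_inv_sorting_perm[OF \<beta> nonneg s])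
  then show "vcg_outcome n \<beta> v (inv s) (clarke_payment n \<beta> v (inv s))"
    by (simp add: vcg_outcome_def efficient_def)
  show "gsp_nash n k \<alpha> \<beta> v (vcg_bid n k \<alpha> \<beta> (v \<circ> s) \<circ> inv s) (inv s)" by (rule vcg_bids_gsp_nash)
  show "\<forall>i\<in>{1..n}. gsp_payment n k \<alpha> (vcg_bid n k \<alpha> \<beta> (v \<circ> s) \<circ> inv s) (inv s) i =
      clarke_payment n \<beta> v (inv s) i"
    using vcg_bids_payment clarke_payment_eq_p_seq[OF \<beta> nonneg s eff] by simp
qed

end

theorem proposition3:
  fixes n k :: nat and \<alpha> \<beta> :: "nat \<Rightarrow> real"
  assumes "in_Rn_gt n k \<alpha>" and "in_Rn_gt n k \<beta>"
  shows "vickrey_preserving_gsp n k \<alpha> \<beta> \<longleftrightarrow>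
    (\<forall>v s. type_profile n v \<longrightarrow> s permutes {1..n} \<longrightarrow>
       (\<forall>j. 1 \<le> j \<and> j < n \<longrightarrow> v (s (j + 1)) \<le> v (s j)) \<longrightarrow>
       (\<forall>j. 1 \<le> j \<and> j < k \<longrightarrow>
          p_seq n k \<beta> (v \<circ> s) (j + 1) / \<alpha> (j + 1) \<le> p_seq n k \<beta> (v \<circ> s) j / \<alpha> j))"
  (is "_ \<longleftrightarrow> ?ratios_decrease")
proof
  assume "vickrey_preserving_gsp n k \<alpha> \<beta>"
  then show ?ratios_decrease
    using vickrey_preserving_imp_ratios_decreasing[OF assms] sorting_perm_iff by blast
next
  assume ?ratios_decrease
  then show "vickrey_preserving_gsp n k \<alpha> \<beta>"
    unfolding vickrey_preserving_gsp_def
    using vcg_bids_vickrey_outcome[OF assms] sorting_perm_exists sorting_perm_iff by metis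
qed

end
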